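(* Let $\alpha \in (0,1)$ and let $\gamma_n = \alpha n$ for each $n$. Let $K:\mathbb{N}_0 \to \mathbb{N}_0$, $n \mapsto K_n$, be a scaling such that for some constant $c>0$, \[ K_n \sim c \cdot r_1(\alpha,n), \qquad \text{where } r_1(\alpha,n) = \frac{\log n}{1-\alpha-\log \alpha}. \] Let $P(n,K_n,\gamma_n)$ denote the probability that the graph $\mathbb{H}(n;K_n,\gamma_n)$ is connected. Then \[ \lim_{n\to\infty} P(n,K_n,\gamma_n) = \begin{cases} 1, & \text{if } c>1,\\ 0, & \text{if } 0<c<1.\end{cases} \]
   Context: Random K-out graph $\mathbb{H}(n;K_n)$: on vertex set $V=\{v_1,\dots,v_n\}$ with labels $\mathcal{N}=\{1,\dots,n\}$, each node $v_i$ independently selects a set $\Gamma_{n,i}\subseteq \mathcal{N}\setminus\{i\}$ of $K_n$ distinct labels uniformly at random (the sets $\Gamma_{n,1},\dots,\Gamma_{n,n}$ are mutually independent). Distinct nodes $v_i,v_j$ are adjacent if $j\in\Gamma_{n,i}$ or $i\in\Gamma_{n,j}$ (undirected graph). The graph $\mathbb{H}(n;K_n,\gamma_n)$ is obtained by choosing a set $D\subset V$ of $\gamma_n$ nodes uniformly at random and deleting them: it has vertex set $R=V\setminus D$, and two distinct vertices of $R$ are adjacent iff they are adjacent in $\mathbb{H}(n;K_n)$. $\log$ is the natural logarithm; $a_n\sim b_n$ means $a_n/b_n\to 1$. All limits are as $n\to\infty$. *)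

theory Defs
  imports "HOL-Probability.Probability" "HOL-Library.Landau_Symbols" "HOL-Library.FuncSet"
begin

text \<open>Sample space of H(n;K,g): each node i in {1..n} chooses a K-subset of {1..n}-{i};
  independently a set D of g deleted labels is chosen. Independent uniform choices
  = uniform distribution on the product set.\<close>
definition kout_space :: "nat \<Rightarrow> nat \<Rightarrow> nat \<Rightarrow> ((nat \<Rightarrow> nat set) \<times> nat set) set" where
  "kout_space n K g =
     (PiE {1..n} (\<lambda>i. {S. S \<subseteq> {1..n} - {i} \<and> card S = K}))
     \<times> {D. D \<subseteq> {1..n} \<and> card D = g}"

definition kout_adj :: "(nat \<Rightarrow> nat set) \<Rightarrow> nat \<Rightarrow> nat \<Rightarrow> bool" where
  "kout_adj \<Gamma> i j \<longleftrightarrow> i \<noteq> j \<and> (j \<in> \<Gamma> i \<or> i \<in> \<Gamma> j)"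

definition connected_on :: "nat set \<Rightarrow> (nat \<Rightarrow> nat \<Rightarrow> bool) \<Rightarrow> bool" where
  "connected_on R E \<longleftrightarrow>
     (\<forall>u\<in>R. \<forall>v\<in>R. (u, v) \<in> {(x, y). x \<in> R \<and> y \<in> R \<and> E x y}\<^sup>*)"

definition P_conn :: "nat \<Rightarrow> nat \<Rightarrow> nat \<Rightarrow> real" where
  "P_conn n K g = measure_pmf.prob (pmf_of_set (kout_space n K g))
      {\<omega>. connected_on ({1..n} - snd \<omega>) (kout_adj (fst \<omega>))}"

end

theory Submission
  imports Defs "HOL-Real_Asymp.Real_Asymp"
begin

text \<open>Condition on the deleted set \<open>D\<close>; only \<open>g = card D\<close> matters, and every node's
  \<open>K\<close> choices are independent and uniform.

  If the graph on the survivors \<open>R\<close> is disconnected, some \<open>S \<subseteq> R\<close> with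
  \<open>1 \<le> card S \<le> card R / 2\<close> has no edge to \<open>R - S\<close>. For a fixed \<open>S\<close> this forces every node
  to avoid a fixed set of labels, which has product probability, and we take a union bound
  over \<open>S\<close>. If \<open>K \<ge> C log n\<close> with \<open>C (1 - \<alpha> - log \<alpha>) > 1\<close>, the cuts with
  \<open>card S \<le> x0 n\<close> contribute a geometric series with ratio about
  \<open>n exp (- K (1 - \<alpha> - log \<alpha>))\<close>, and the larger ones at most \<open>2^n exp (- \<Omega>(n K))\<close>.

  If \<open>K \<le> C log n\<close> with \<open>C (1 - \<alpha> - log \<alpha>) < 1\<close>, the number \<open>X\<close> of isolated survivors has
  mean \<open>\<mu> \<approx> n^(1 - C (1 - \<alpha> - log \<alpha>)) \<rightarrow> \<infinity>\<close>, and two survivors are isolated simultaneously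
  with probability at most \<open>(\<mu> / ((n - g) r))\<^sup>2\<close>, where \<open>r = 1 - K / (n - 1) \<rightarrow> 1\<close>.
  Chebyshev's inequality gives \<open>P(X = 0) \<le> 1/\<mu> + 1/r\<^sup>2 - 1 \<rightarrow> 0\<close>, and a connected graph on
  at least two nodes has no isolated node.\<close>

section \<open>Ratios of binomial coefficients\<close>

lemma binomial_ratio_eq_prod:
  fixes p q K :: nat
  assumes "K \<le> p" "p \<le> q"
  shows "real (p choose K) / real (q choose K) = (\<Prod>i = 0..<K. real (p - i) / real (q - i))"
proof -
  have "real (p choose K) / real (q choose K) =
     (\<Prod>i = 0..<K. real (p - i) / real (K - i)) / (\<Prod>i = 0..<K. real (q - i) / real (K - i))"
    using assms by (simp add: binomial_altdef_of_nat)
  also have "\<dots> = (\<Prod>i = 0..<K. (real (p - i) / real (K - i)) / (real (q - i) / real (K - i)))"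
    by (simp add: prod_dividef)
  also have "\<dots> = (\<Prod>i = 0..<K. real (p - i) / real (q - i))"
    by (rule prod.cong) auto
  finally show ?thesis .
qed

lemma binomial_ratio_le_power:
  fixes p q K :: nat
  assumes "p \<le> q" "0 < q"
  shows "real (p choose K) / real (q choose K) \<le> (real p / real q) ^ K"
proof (cases "K \<le> p")
  case False
  then show ?thesis by (simp add: binomial_eq_0)
next
  case True
  have "real (p choose K) / real (q choose K) = (\<Prod>i = 0..<K. real (p - i) / real (q - i))"
    using binomial_ratio_eq_prod[OF True assms(1)] .
  also have "\<dots> \<le> (\<Prod>i = 0..<K. real p / real q)"
  proof (rule prod_mono)
    fix i assume "i \<in> {0..<K}"
    then have i: "i < K" by simp
    have "real i * real p \<le> real i * real q" using assms by (intro mult_left_mono) auto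
    then have "real (p - i) * real q \<le> real p * real (q - i)"
      using i True assms by (simp add: of_nat_diff algebra_simps)
    moreover have "real (q - i) > 0" using i True assms by simp
    ultimately show "0 \<le> real (p - i) / real (q - i) \<and> real (p - i) / real (q - i) \<le> real p / real q"
      using assms by (simp add: divide_simps)
  qed
  finally show ?thesis by simp
qed

lemma power_le_binomial_ratio:
  fixes p q K :: nat
  assumes "K \<le> p" "p \<le> q"
  shows "((real p - real K) / real q) ^ K \<le> real (p choose K) / real (q choose K)"
proof (cases "q = 0")
  case True
  then show ?thesis using assms by simp
next
  case False
  have "((real p - real K) / real q) ^ K = (\<Prod>i = 0..<K. (real p - real K) / real q)" by simp
  also have "\<dots> \<le> (\<Prod>i = 0..<K. real (p - i) / real (q - i))"
  proof (rule prod_mono)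
    fix i assume "i \<in> {0..<K}"
    then have i: "i < K" by simp
    have "real i * (real q - real p) \<le> real K * (real q - real i)"
      using i assms by (intro mult_mono) auto
    then have "(real p - real K) * real (q - i) \<le> real (p - i) * real q"
      using i assms by (simp add: of_nat_diff algebra_simps)
    moreover have "real (q - i) > 0" using i assms by simp
    ultimately show "0 \<le> (real p - real K) / real q \<and> (real p - real K) / real q \<le> real (p - i) / real (q - i)"
      using assms False by (simp add: divide_simps)
  qed
  also have "\<dots> = real (p choose K) / real (q choose K)"
    using binomial_ratio_eq_prod[OF assms] by simp
  finally show ?thesis .
qed

lemma binomial_ratio_pred:
  fixes q K :: nat
  assumes "0 < q"
  shows "real ((q - 1) choose K) / real (q choose K) = real (q - K) / real q"
proof (cases "K \<le> q")
  case True
  have "real (q - K) * real (q choose K) = real q * real ((q - 1) choose K)"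
    by (metis binomial_absorb_comp of_nat_mult)
  moreover have "real (q choose K) > 0" using True by simp
  ultimately show ?thesis using assms by (simp add: field_simps)
next
  case False
  then show ?thesis by (simp add: binomial_eq_0)
qed

lemma binomial_ratio_pred2_le:
  fixes q K :: nat
  assumes "K + 2 \<le> q"
  shows "real ((q - 2) choose K) / real (q choose K) \<le> (real ((q - 1) choose K) / real (q choose K))\<^sup>2"
proof -
  have "q - 1 - 1 = q - 2" by simp
  then have q1: "real ((q - 2) choose K) / real ((q - 1) choose K) = real (q - 1 - K) / real (q - 1)"
    using binomial_ratio_pred[of "q - 1" K] assms by simp
  have "real (q - 1 - K) * real q \<le> real (q - K) * real (q - 1)"
    using assms by (simp add: of_nat_diff algebra_simps)
  then have le: "real (q - 1 - K) / real (q - 1) \<le> real (q - K) / real q"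
    using assms by (simp add: divide_simps)
  have pos: "real ((q - 1) choose K) > 0" using assms by simp
  have "real ((q - 2) choose K) / real (q choose K)
      = real ((q - 2) choose K) / real ((q - 1) choose K) * (real ((q - 1) choose K) / real (q choose K))"
    using pos by simp
  also have "\<dots> \<le> real (q - K) / real q * (real ((q - 1) choose K) / real (q choose K))"
    unfolding q1 using le by (intro mult_right_mono) auto
  also have "\<dots> = (real ((q - 1) choose K) / real (q choose K))\<^sup>2"
    using binomial_ratio_pred[of q K] assms by (simp add: power2_eq_square)
  finally show ?thesis .
qed

lemma prod_three_values:
  fixes f :: "'a \<Rightarrow> 'b::comm_monoid_mult"
  assumes "finite I" "A \<subseteq> I" "B \<subseteq> I" "A \<inter> B = {}"
    and "\<And>i. i \<in> A \<Longrightarrow> f i = a" "\<And>i. i \<in> B \<Longrightarrow> f i = b" "\<And>i. i \<in> I - A - B \<Longrightarrow> f i = c"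
  shows "(\<Prod>i\<in>I. f i) = a ^ card A * b ^ card B * c ^ card (I - A - B)"
proof -
  have fin: "finite A" "finite B" using assms finite_subset by auto
  have "(\<Prod>i\<in>I. f i) = (\<Prod>i\<in>A \<union> (B \<union> (I - A - B)). f i)"
    using assms by (intro prod.cong) auto
  also have "\<dots> = (\<Prod>i\<in>A. f i) * (\<Prod>i\<in>B \<union> (I - A - B). f i)"
    by (rule prod.union_disjoint) (use fin assms in auto)
  also have "(\<Prod>i\<in>B \<union> (I - A - B). f i) = (\<Prod>i\<in>B. f i) * (\<Prod>i\<in>I - A - B. f i)"
    by (rule prod.union_disjoint) (use fin assms in auto)
  also have "(\<Prod>i\<in>A. f i) * ((\<Prod>i\<in>B. f i) * (\<Prod>i\<in>I - A - B. f i))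
      = a ^ card A * (b ^ card B * c ^ card (I - A - B))"
    using assms by simp
  finally show ?thesis by (simp add: mult.assoc)
qed

definition choice_sets :: "nat \<Rightarrow> nat \<Rightarrow> nat \<Rightarrow> nat set set" where
  "choice_sets n K i = {S. S \<subseteq> {1..n} - {i} \<and> card S = K}"

definition kout_choices :: "nat \<Rightarrow> nat \<Rightarrow> (nat \<Rightarrow> nat set) set" where
  "kout_choices n K = PiE {1..n} (choice_sets n K)"

definition deletion_sets :: "nat \<Rightarrow> nat \<Rightarrow> nat set set" where
  "deletion_sets n g = {D. D \<subseteq> {1..n} \<and> card D = g}"

lemma kout_space_eq_Times: "kout_space n K g = kout_choices n K \<times> deletion_sets n g"
proof -
  have "choice_sets n K = (\<lambda>i. {S. S \<subseteq> {1..n} - {i} \<and> card S = K})"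
    by (rule ext) (simp add: choice_sets_def)
  then show ?thesis by (simp add: kout_space_def kout_choices_def deletion_sets_def)
qed

lemma finite_choice_sets: "finite (choice_sets n K i)"
  unfolding choice_sets_def by (rule finite_subset[of _ "Pow {1..n}"]) auto

lemma finite_kout_choices: "finite (kout_choices n K)"
  unfolding kout_choices_def by (intro finite_PiE finite_choice_sets) auto

lemma finite_deletion_sets: "finite (deletion_sets n g)"
  unfolding deletion_sets_def by (rule finite_subset[of _ "Pow {1..n}"]) auto

lemma deletion_sets_nonempty: "g \<le> n \<Longrightarrow> deletion_sets n g \<noteq> {}"
  unfolding deletion_sets_def by (auto intro!: exI[of _ "{1..g}"])

lemma card_kout_choices_avoiding:
  "card {\<Gamma> \<in> kout_choices n K. \<forall>l\<in>{1..n}. \<Gamma> l \<inter> F l = {}}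
     = (\<Prod>l\<in>{1..n}. card ({1..n} - {l} - F l) choose K)"
proof -
  have "{\<Gamma> \<in> kout_choices n K. \<forall>l\<in>{1..n}. \<Gamma> l \<inter> F l = {}}
      = PiE {1..n} (\<lambda>l. {S \<in> choice_sets n K l. S \<inter> F l = {}})"
    unfolding kout_choices_def by (auto simp: PiE_iff extensional_def)
  moreover have "{S \<in> choice_sets n K l. S \<inter> F l = {}} = {S. S \<subseteq> {1..n} - {l} - F l \<and> card S = K}" for l
    by (auto simp: choice_sets_def)
  ultimately have "card {\<Gamma> \<in> kout_choices n K. \<forall>l\<in>{1..n}. \<Gamma> l \<inter> F l = {}}
      = (\<Prod>l\<in>{1..n}. card {S. S \<subseteq> {1..n} - {l} - F l \<and> card S = K})"
    by (simp add: card_PiE)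
  then show ?thesis by (simp add: n_subsets)
qed

lemma card_kout_choices: "card (kout_choices n K) = ((n - 1) choose K) ^ n"
  using card_kout_choices_avoiding[of n K "\<lambda>_. {}"] by simp

lemma kout_choices_nonempty: "K < n \<Longrightarrow> kout_choices n K \<noteq> {}"
  using card_kout_choices[of n K] by auto

text \<open>The probability that a node's \<open>K\<close> choices all lie in a fixed set of \<open>j\<close> of the
  other \<open>n - 1\<close> labels.\<close>
definition choice_ratio :: "nat \<Rightarrow> nat \<Rightarrow> nat \<Rightarrow> real" where
  "choice_ratio n K j = real (j choose K) / real ((n - 1) choose K)"

lemma fraction_kout_choices_avoiding:
  assumes "K < n"
  shows "real (card {\<Gamma> \<in> kout_choices n K. \<forall>l\<in>{1..n}. \<Gamma> l \<inter> F l = {}}) / real (card (kout_choices n K))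
     = (\<Prod>l\<in>{1..n}. choice_ratio n K (card ({1..n} - {l} - F l)))"
  unfolding card_kout_choices_avoiding card_kout_choices choice_ratio_def
  by (simp add: prod_dividef)

lemma prob_pmf_of_set_Times_le:
  assumes "finite A" "A \<noteq> {}" "finite B" "B \<noteq> {}"
    and "\<And>b. b \<in> B \<Longrightarrow> real (card {a \<in> A. Q a b}) \<le> \<epsilon> * real (card A)"
  shows "measure_pmf.prob (pmf_of_set (A \<times> B)) {\<omega>. Q (fst \<omega>) (snd \<omega>)} \<le> \<epsilon>"
proof -
  have "(A \<times> B) \<inter> {\<omega>. Q (fst \<omega>) (snd \<omega>)} = (\<Union>b\<in>B. {a \<in> A. Q a b} \<times> {b})" by auto
  also have "card \<dots> = (\<Sum>b\<in>B. card ({a \<in> A. Q a b} \<times> {b}))"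
    using assms(1,3) by (intro card_UN_disjoint) auto
  finally have "card ((A \<times> B) \<inter> {\<omega>. Q (fst \<omega>) (snd \<omega>)}) = (\<Sum>b\<in>B. card {a \<in> A. Q a b})"
    by (simp add: card_cartesian_product)
  then have "real (card ((A \<times> B) \<inter> {\<omega>. Q (fst \<omega>) (snd \<omega>)})) = (\<Sum>b\<in>B. real (card {a \<in> A. Q a b}))"
    by simp
  also have "\<dots> \<le> (\<Sum>b\<in>B. \<epsilon> * real (card A))"
    using assms(5) by (rule sum_mono)
  also have "\<dots> = \<epsilon> * real (card (A \<times> B))" by (simp add: card_cartesian_product)
  finally show ?thesis
    using assms by (simp add: measure_pmf_of_set card_gt_0_iff divide_le_eq)
qed

lemma P_conn_le:
  assumes "K < n" "g \<le> n"
    and "\<And>D. D \<in> deletion_sets n g \<Longrightarrow>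
      real (card {\<Gamma> \<in> kout_choices n K. connected_on ({1..n} - D) (kout_adj \<Gamma>)}) \<le> \<epsilon> * real (card (kout_choices n K))"
  shows "P_conn n K g \<le> \<epsilon>"
  unfolding P_conn_def kout_space_eq_Times
  using assms finite_kout_choices finite_deletion_sets kout_choices_nonempty deletion_sets_nonempty
  by (intro prob_pmf_of_set_Times_le) auto

lemma P_conn_ge:
  assumes "K < n" "g \<le> n"
    and "\<And>D. D \<in> deletion_sets n g \<Longrightarrow>
      real (card {\<Gamma> \<in> kout_choices n K. \<not> connected_on ({1..n} - D) (kout_adj \<Gamma>)}) \<le> \<epsilon> * real (card (kout_choices n K))"
  shows "1 - \<epsilon> \<le> P_conn n K g"
proof -
  let ?M = "pmf_of_set (kout_space n K g)"
  have "measure_pmf.prob ?M {\<omega>. \<not> connected_on ({1..n} - snd \<omega>) (kout_adj (fst \<omega>))} \<le> \<epsilon>"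
    unfolding kout_space_eq_Times
    using assms finite_kout_choices finite_deletion_sets kout_choices_nonempty deletion_sets_nonempty
    by (intro prob_pmf_of_set_Times_le) auto
  moreover have "measure_pmf.prob ?M {\<omega>. \<not> connected_on ({1..n} - snd \<omega>) (kout_adj (fst \<omega>))} = 1 - P_conn n K g"
    unfolding P_conn_def by (subst measure_pmf.prob_compl[symmetric]) (auto intro: arg_cong2[where f = measure])
  ultimately show ?thesis by simp
qed

section \<open>Cuts in the graph\<close>

definition cut_free :: "(nat \<Rightarrow> nat set) \<Rightarrow> nat set \<Rightarrow> nat set \<Rightarrow> bool" where
  "cut_free \<Gamma> S T \<longleftrightarrow> (\<forall>i\<in>S. \<forall>j\<in>T. \<not> kout_adj \<Gamma> i j)"

lemma kout_adj_sym: "kout_adj \<Gamma> i j \<longleftrightarrow> kout_adj \<Gamma> j i"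
  unfolding kout_adj_def by auto

lemma not_connected_on_imp_small_cut:
  assumes "finite R" "\<not> connected_on R E" "\<And>x y. E x y \<Longrightarrow> E y x"
  shows "\<exists>S\<subseteq>R. 1 \<le> card S \<and> card S \<le> card R div 2 \<and> (\<forall>i\<in>S. \<forall>j\<in>R - S. \<not> E i j)"
proof -
  let ?E = "{(x, y). x \<in> R \<and> y \<in> R \<and> E x y}"
  obtain u v where uv: "u \<in> R" "v \<in> R" "(u, v) \<notin> ?E\<^sup>*"
    using assms(2) unfolding connected_on_def by blast
  define C where "C = {y. (u, y) \<in> ?E\<^sup>*}"
  have CR: "C \<subseteq> R"
    using uv(1) by (auto simp: C_def elim: rtranclE)
  have "C \<noteq> {}" "R - C \<noteq> {}" using uv by (auto simp: C_def)
  then have "1 \<le> card C" "1 \<le> card (R - C)"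
    using CR assms(1) by (simp_all add: Suc_le_eq card_gt_0_iff finite_subset)
  have cut: "\<not> E i j \<and> \<not> E j i" if "i \<in> C" "j \<in> R - C" for i j
    using that CR assms(3) by (auto simp: C_def intro: rtrancl_into_rtrancl)
  have "card C + card (R - C) = card R"
    using CR assms(1) by (metis card_Diff_subset finite_subset le_add_diff_inverse card_mono)
  then consider "card C \<le> card R div 2" | "card (R - C) \<le> card R div 2" by linarith
  then show ?thesis
  proof cases
    case 1
    then show ?thesis using CR \<open>1 \<le> card C\<close> cut by blast
  next
    case 2
    moreover have "\<forall>i\<in>R - C. \<forall>j\<in>R - (R - C). \<not> E i j" using cut CR by blast
    ultimately show ?thesis using \<open>1 \<le> card (R - C)\<close> by (meson Diff_subset)
  qed
qed

lemma connected_on_imp_neighbour: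
  assumes "connected_on R E" "i \<in> R" "j \<in> R" "i \<noteq> j"
  obtains y where "y \<in> R" "E i y"
proof -
  let ?E = "{(x, y). x \<in> R \<and> y \<in> R \<and> E x y}"
  have "(i, j) \<in> ?E\<^sup>*" using assms unfolding connected_on_def by blast
  then obtain y where "(i, y) \<in> ?E" using assms(4) by (cases rule: converse_rtranclE) auto
  then show thesis using that by auto
qed

text \<open>The labels that node \<open>l\<close> must not choose if there is to be no edge between \<open>S\<close> and \<open>T\<close>.\<close>
definition cut_forbidden :: "nat set \<Rightarrow> nat set \<Rightarrow> nat \<Rightarrow> nat set" where
  "cut_forbidden S T l = (if l \<in> S then T else {}) \<union> (if l \<in> T then S else {}) - {l}"

lemma cut_free_iff_avoiding:
  assumes "S \<subseteq> {1..n}" "T \<subseteq> {1..n}"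
  shows "cut_free \<Gamma> S T \<longleftrightarrow> (\<forall>l\<in>{1..n}. \<Gamma> l \<inter> cut_forbidden S T l = {})"
proof -
  have "cut_free \<Gamma> S T \<longleftrightarrow> (\<forall>i\<in>S. \<forall>j\<in>T. i \<noteq> j \<longrightarrow> j \<notin> \<Gamma> i \<and> i \<notin> \<Gamma> j)"
    unfolding cut_free_def kout_adj_def by blast
  also have "\<dots> \<longleftrightarrow> (\<forall>l\<in>{1..n}. \<Gamma> l \<inter> cut_forbidden S T l = {})"
    using assms by (auto simp: cut_forbidden_def split: if_splits)
  finally show ?thesis .
qed

lemma fraction_cut_free:
  assumes "K < n" "S \<subseteq> {1..n}" "T \<subseteq> {1..n}"
  shows "real (card {\<Gamma> \<in> kout_choices n K. cut_free \<Gamma> S T}) / real (card (kout_choices n K))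
     = (\<Prod>l\<in>{1..n}. choice_ratio n K (card ({1..n} - {l} - cut_forbidden S T l)))"
  using fraction_kout_choices_avoiding[OF assms(1)] cut_free_iff_avoiding[OF assms(2,3)] by simp

lemma choice_ratio_full: "K < n \<Longrightarrow> choice_ratio n K (n - 1) = 1"
  by (simp add: choice_ratio_def)

lemma fraction_cut_free_complement:
  assumes "K < n" "D \<subseteq> {1..n}" "S \<subseteq> {1..n} - D"
  shows "real (card {\<Gamma> \<in> kout_choices n K. cut_free \<Gamma> S ({1..n} - D - S)}) / real (card (kout_choices n K))
     = choice_ratio n K (card S + card D - 1) ^ card S * choice_ratio n K (n - 1 - card S) ^ (n - card D - card S)"
proof -
  define T where "T = {1..n} - D - S"
  have fin: "finite S" "finite D"
    using assms(2,3) by (metis finite_Diff finite_atLeastAtMost finite_subset)+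
  have "(\<Prod>l\<in>{1..n}. choice_ratio n K (card ({1..n} - {l} - cut_forbidden S T l)))
      = choice_ratio n K (card S + card D - 1) ^ card S * choice_ratio n K (n - 1 - card S) ^ card T
        * 1 ^ card ({1..n} - S - T)"
  proof (rule prod_three_values)
    fix l assume l: "l \<in> S"
    then have "{1..n} - {l} - cut_forbidden S T l = (S \<union> D) - {l}"
      using assms by (auto simp: T_def cut_forbidden_def)
    moreover have "S \<inter> D = {}" using assms(3) by blast
    ultimately show "choice_ratio n K (card ({1..n} - {l} - cut_forbidden S T l)) = choice_ratio n K (card S + card D - 1)"
      using l fin by (simp add: card_Un_disjoint)
  next
    fix l assume l: "l \<in> T"
    then have "{1..n} - {l} - cut_forbidden S T l = ({1..n} - S) - {l}"
      by (auto simp: T_def cut_forbidden_def)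
    moreover have "card ({1..n} - S) = n - card S"
      using assms(3) fin by (subst card_Diff_subset) auto
    ultimately show "choice_ratio n K (card ({1..n} - {l} - cut_forbidden S T l)) = choice_ratio n K (n - 1 - card S)"
      using l by (simp add: T_def card_Diff_singleton)
  qed (use assms choice_ratio_full in \<open>auto simp: T_def cut_forbidden_def\<close>)
  moreover have "card T = n - card D - card S"
    using assms fin by (simp add: T_def card_Diff_subset Diff_subset_conv)
  ultimately show ?thesis
    using fraction_cut_free[OF assms(1), of S T] assms by (auto simp: T_def)
qed

lemma fraction_isolated:
  assumes "K < n" "D \<subseteq> {1..n}" "I \<subseteq> {1..n} - D"
  shows "real (card {\<Gamma> \<in> kout_choices n K. cut_free \<Gamma> I ({1..n} - D)}) / real (card (kout_choices n K))
     = choice_ratio n K (card D) ^ card I * choice_ratio n K (n - 1 - card I) ^ (n - card D - card I)"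
proof -
  define R where "R = {1..n} - D"
  have fin: "finite I" "finite D"
    using assms(2,3) by (metis finite_Diff finite_atLeastAtMost finite_subset)+
  have "(\<Prod>l\<in>{1..n}. choice_ratio n K (card ({1..n} - {l} - cut_forbidden I R l)))
      = choice_ratio n K (card D) ^ card I * choice_ratio n K (n - 1 - card I) ^ card (R - I)
        * 1 ^ card ({1..n} - I - (R - I))"
  proof (rule prod_three_values)
    fix l assume "l \<in> I"
    then have "{1..n} - {l} - cut_forbidden I R l = D"
      using assms by (auto simp: R_def cut_forbidden_def)
    then show "choice_ratio n K (card ({1..n} - {l} - cut_forbidden I R l)) = choice_ratio n K (card D)"
      by simp
  next
    fix l assume l: "l \<in> R - I"
    then have "{1..n} - {l} - cut_forbidden I R l = ({1..n} - I) - {l}"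
      by (auto simp: R_def cut_forbidden_def)
    moreover have "card ({1..n} - I) = n - card I"
      using assms(3) fin by (subst card_Diff_subset) auto
    ultimately show "choice_ratio n K (card ({1..n} - {l} - cut_forbidden I R l)) = choice_ratio n K (n - 1 - card I)"
      using l by (simp add: R_def card_Diff_singleton)
  qed (use assms choice_ratio_full in \<open>auto simp: R_def cut_forbidden_def\<close>)
  moreover have "card (R - I) = n - card D - card I"
    using assms fin by (simp add: R_def card_Diff_subset Diff_subset_conv)
  ultimately show ?thesis
    using fraction_cut_free[OF assms(1), of I R] assms by (auto simp: R_def)
qed

section \<open>The union bound over cuts\<close>

text \<open>The probability that a fixed set of \<open>k\<close> of the \<open>n - g\<close> surviving nodes has no edge to
  the other survivors.\<close>
definition cut_prob :: "nat \<Rightarrow> nat \<Rightarrow> nat \<Rightarrow> nat \<Rightarrow> real" where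
  "cut_prob n K g k = choice_ratio n K (k + g - 1) ^ k * choice_ratio n K (n - 1 - k) ^ (n - g - k)"

definition cut_bound :: "nat \<Rightarrow> nat \<Rightarrow> nat \<Rightarrow> real" where
  "cut_bound n K g = (\<Sum>k = 1..(n - g) div 2. real ((n - g) choose k) * cut_prob n K g k)"

lemma card_cut_free_complement:
  assumes "K < n" "D \<in> deletion_sets n g" "S \<subseteq> {1..n} - D"
  shows "real (card {\<Gamma> \<in> kout_choices n K. cut_free \<Gamma> S ({1..n} - D - S)})
     = cut_prob n K g (card S) * real (card (kout_choices n K))"
proof -
  have "card (kout_choices n K) > 0"
    using kout_choices_nonempty[OF assms(1)] finite_kout_choices by (simp add: card_gt_0_iff)
  moreover have "D \<subseteq> {1..n}" "card D = g" using assms(2) by (auto simp: deletion_sets_def)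
  ultimately show ?thesis
    using fraction_cut_free_complement[OF assms(1) _ assms(3)] by (simp add: cut_prob_def field_simps)
qed

lemma card_disconnected_le:
  assumes "K < n" "D \<in> deletion_sets n g"
  shows "real (card {\<Gamma> \<in> kout_choices n K. \<not> connected_on ({1..n} - D) (kout_adj \<Gamma>)})
     \<le> cut_bound n K g * real (card (kout_choices n K))"
proof -
  define R where "R = {1..n} - D"
  define G where "G = kout_choices n K"
  define cuts where "cuts k = (\<Union>S\<in>{S. S \<subseteq> R \<and> card S = k}. {\<Gamma> \<in> G. cut_free \<Gamma> S (R - S)})" for k
  have fR: "finite R" and cR: "card R = n - g"
    using assms(2) by (auto simp: R_def deletion_sets_def card_Diff_subset finite_subset)
  have "{\<Gamma> \<in> G. \<not> connected_on R (kout_adj \<Gamma>)} \<subseteq> (\<Union>k\<in>{1..(n - g) div 2}. cuts k)"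
  proof safe
    fix \<Gamma> assume "\<Gamma> \<in> G" "\<not> connected_on R (kout_adj \<Gamma>)"
    then obtain S where "S \<subseteq> R" "1 \<le> card S" "card S \<le> card R div 2" "cut_free \<Gamma> S (R - S)"
      using not_connected_on_imp_small_cut[OF fR] kout_adj_sym unfolding cut_free_def by metis
    then have "\<Gamma> \<in> cuts (card S)" "card S \<in> {1..(n - g) div 2}"
      using \<open>\<Gamma> \<in> G\<close> cR by (auto simp: cuts_def)
    then show "\<Gamma> \<in> (\<Union>k\<in>{1..(n - g) div 2}. cuts k)" by blast
  qed
  then have "card {\<Gamma> \<in> G. \<not> connected_on R (kout_adj \<Gamma>)} \<le> card (\<Union>k\<in>{1..(n - g) div 2}. cuts k)"
    by (intro card_mono) (auto simp: G_def cuts_def intro: finite_subset[OF _ finite_kout_choices])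
  also have "\<dots> \<le> (\<Sum>k = 1..(n - g) div 2. \<Sum>S\<in>{S. S \<subseteq> R \<and> card S = k}. card {\<Gamma> \<in> G. cut_free \<Gamma> S (R - S)})"
    unfolding cuts_def by (intro order.trans[OF card_UN_le] sum_mono card_UN_le) (auto simp: fR)
  finally have "real (card {\<Gamma> \<in> G. \<not> connected_on R (kout_adj \<Gamma>)})
      \<le> real (\<Sum>k = 1..(n - g) div 2. \<Sum>S\<in>{S. S \<subseteq> R \<and> card S = k}. card {\<Gamma> \<in> G. cut_free \<Gamma> S (R - S)})"
    by (simp only: of_nat_le_iff)
  also have "\<dots> = (\<Sum>k = 1..(n - g) div 2. \<Sum>S\<in>{S. S \<subseteq> R \<and> card S = k}. cut_prob n K g k * real (card G))"
    unfolding of_nat_sum G_def R_def using card_cut_free_complement[OF assms] by (intro sum.cong refl) auto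
  also have "\<dots> = cut_bound n K g * real (card G)"
    using fR cR by (simp add: cut_bound_def n_subsets sum_distrib_right mult.assoc)
  finally show ?thesis by (simp add: G_def R_def)
qed

section \<open>The second moment of the number of isolated nodes\<close>

lemma card_zero_mult_square_le:
  fixes X :: "'a \<Rightarrow> real"
  assumes "finite G"
  shows "real (card {\<omega> \<in> G. X \<omega> = 0}) * \<mu>\<^sup>2
     \<le> (\<Sum>\<omega>\<in>G. (X \<omega>)\<^sup>2) - 2 * \<mu> * (\<Sum>\<omega>\<in>G. X \<omega>) + \<mu>\<^sup>2 * real (card G)"
proof -
  have "real (card {\<omega> \<in> G. X \<omega> = 0}) * \<mu>\<^sup>2 = (\<Sum>\<omega>\<in>{\<omega> \<in> G. X \<omega> = 0}. (X \<omega> - \<mu>)\<^sup>2)"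
    by simp
  also have "\<dots> \<le> (\<Sum>\<omega>\<in>G. (X \<omega> - \<mu>)\<^sup>2)"
    using assms by (intro sum_mono2) auto
  also have "\<dots> = (\<Sum>\<omega>\<in>G. (X \<omega>)\<^sup>2) - 2 * \<mu> * (\<Sum>\<omega>\<in>G. X \<omega>) + \<mu>\<^sup>2 * real (card G)"
    by (simp add: power2_diff sum.distrib sum_subtractf sum_distrib_left[symmetric] sum_distrib_right[symmetric])
  finally show ?thesis .
qed

lemma card_none_le_second_moment:
  fixes G :: "'a set" and R :: "'i set" and E :: "'i \<Rightarrow> 'a \<Rightarrow> bool"
  assumes "finite G" "finite R" "R \<noteq> {}" "0 < p" "0 \<le> q"
    and single: "\<And>i. i \<in> R \<Longrightarrow> real (card {\<omega> \<in> G. E i \<omega>}) = p * real (card G)"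
    and pair: "\<And>i j. i \<in> R \<Longrightarrow> j \<in> R \<Longrightarrow> i \<noteq> j \<Longrightarrow> real (card {\<omega> \<in> G. E i \<omega> \<and> E j \<omega>}) \<le> q * real (card G)"
  shows "real (card {\<omega> \<in> G. \<forall>i\<in>R. \<not> E i \<omega>}) \<le> (1 / (real (card R) * p) + q / p\<^sup>2 - 1) * real (card G)"
proof -
  define N where "N = real (card G)"
  define m where "m = real (card R)"
  define \<mu> where "\<mu> = m * p"
  define X where "X \<omega> = (\<Sum>i\<in>R. of_bool (E i \<omega>) :: real)" for \<omega>
  have R1: "1 \<le> card R" using assms(2,3) by (simp add: Suc_le_eq card_gt_0_iff)
  then have m: "m \<ge> 1" by (simp add: m_def)
  have count: "(\<Sum>\<omega>\<in>G. of_bool (P \<omega>) :: real) = real (card {\<omega> \<in> G. P \<omega>})" for P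
    using assms(1) by (simp add: Int_def conj_commute)
  have first: "(\<Sum>\<omega>\<in>G. X \<omega>) = \<mu> * N"
    unfolding X_def using single by (subst sum.swap) (simp add: count m_def \<mu>_def N_def sum_distrib_right)
  have "(\<Sum>\<omega>\<in>G. (X \<omega>)\<^sup>2) = (\<Sum>i\<in>R. \<Sum>j\<in>R. real (card {\<omega> \<in> G. E i \<omega> \<and> E j \<omega>}))"
    by (simp add: X_def power2_eq_square sum_product sum.swap[of _ G] of_bool_conj flip: count)
  also have "\<dots> \<le> (\<Sum>i\<in>R. p * N + (m - 1) * (q * N))"
  proof (rule sum_mono)
    fix i assume i: "i \<in> R"
    have "(\<Sum>j\<in>R. real (card {\<omega> \<in> G. E i \<omega> \<and> E j \<omega>}))
        = real (card {\<omega> \<in> G. E i \<omega>}) + (\<Sum>j\<in>R - {i}. real (card {\<omega> \<in> G. E i \<omega> \<and> E j \<omega>}))"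
      using i assms(2) by (simp add: sum.remove)
    also have "\<dots> \<le> p * N + (\<Sum>j\<in>R - {i}. q * N)"
      using i single pair by (intro add_mono sum_mono) (auto simp: N_def)
    finally show "(\<Sum>j\<in>R. real (card {\<omega> \<in> G. E i \<omega> \<and> E j \<omega>})) \<le> p * N + (m - 1) * (q * N)"
      using i assms(2) R1 by (simp add: m_def of_nat_diff card_Diff_singleton)
  qed
  also have "\<dots> \<le> (\<mu> + m\<^sup>2 * q) * N"
    using assms(5) m by (simp add: \<mu>_def m_def N_def power2_eq_square algebra_simps mult_left_mono)
  finally have second: "(\<Sum>\<omega>\<in>G. (X \<omega>)\<^sup>2) \<le> (\<mu> + m\<^sup>2 * q) * N" .
  have "{\<omega> \<in> G. \<forall>i\<in>R. \<not> E i \<omega>} = {\<omega> \<in> G. X \<omega> = 0}"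
    using assms(2) by (auto simp: X_def)
  then have "real (card {\<omega> \<in> G. \<forall>i\<in>R. \<not> E i \<omega>}) * \<mu>\<^sup>2 \<le> (\<mu> + m\<^sup>2 * q - \<mu>\<^sup>2) * N"
    using card_zero_mult_square_le[OF assms(1), of X \<mu>] first second
    by (simp add: N_def power2_eq_square algebra_simps)
  moreover have "0 < \<mu>" using m assms(4) by (simp add: \<mu>_def)
  ultimately have "real (card {\<omega> \<in> G. \<forall>i\<in>R. \<not> E i \<omega>}) \<le> (\<mu> + m\<^sup>2 * q - \<mu>\<^sup>2) / \<mu>\<^sup>2 * N"
    by (simp add: field_simps)
  also have "(\<mu> + m\<^sup>2 * q - \<mu>\<^sup>2) / \<mu>\<^sup>2 = 1 / (m * p) + q / p\<^sup>2 - 1"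
    using m assms(4) by (simp add: \<mu>_def field_simps power2_eq_square)
  finally show ?thesis by (simp add: m_def N_def)
qed

text \<open>The probability that a fixed surviving node is isolated.\<close>
definition isolation_prob :: "nat \<Rightarrow> nat \<Rightarrow> nat \<Rightarrow> real" where
  "isolation_prob n K g = choice_ratio n K g * choice_ratio n K (n - 2) ^ (n - g - 1)"

lemma card_isolated:
  assumes "K < n" "D \<in> deletion_sets n g" "I \<subseteq> {1..n} - D"
  shows "real (card {\<Gamma> \<in> kout_choices n K. cut_free \<Gamma> I ({1..n} - D)})
     = choice_ratio n K g ^ card I * choice_ratio n K (n - 1 - card I) ^ (n - g - card I)
       * real (card (kout_choices n K))"
proof -
  have "card (kout_choices n K) > 0"
    using kout_choices_nonempty[OF assms(1)] finite_kout_choices by (simp add: card_gt_0_iff)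
  moreover have "D \<subseteq> {1..n}" "card D = g" using assms(2) by (auto simp: deletion_sets_def)
  ultimately show ?thesis
    using fraction_isolated[OF assms(1) _ assms(3)] by (simp add: field_simps)
qed

lemma card_isolated_pair_le:
  assumes "K + 3 \<le> n" "g + 2 \<le> n" "D \<in> deletion_sets n g"
    and "i \<in> {1..n} - D" "j \<in> {1..n} - D" "i \<noteq> j"
  shows "real (card {\<Gamma> \<in> kout_choices n K. cut_free \<Gamma> {i} ({1..n} - D) \<and> cut_free \<Gamma> {j} ({1..n} - D)})
     \<le> (isolation_prob n K g / choice_ratio n K (n - 2))\<^sup>2 * real (card (kout_choices n K))"
proof -
  define r where "r = choice_ratio n K (n - 2)"
  have r: "r > 0" using assms(1) by (simp add: r_def choice_ratio_def)
  have "n - 1 - 2 = n - 3" "n - 1 - 1 = n - 2" by simp_all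
  then have "choice_ratio n K (n - 3) \<le> r\<^sup>2"
    using binomial_ratio_pred2_le[of K "n - 1"] assms(1) by (simp add: r_def choice_ratio_def)
  then have le: "choice_ratio n K (n - 3) ^ (n - g - 2) \<le> (r\<^sup>2) ^ (n - g - 2)"
    by (simp add: power_mono choice_ratio_def)
  have "n - g - 1 = Suc (n - g - 2)" using assms(2) by simp
  then have "isolation_prob n K g / r = choice_ratio n K g * r ^ (n - g - 2)"
    using r by (simp add: isolation_prob_def r_def)
  then have eq: "(isolation_prob n K g / r)\<^sup>2 = (choice_ratio n K g)\<^sup>2 * (r\<^sup>2) ^ (n - g - 2)"
    by (simp add: power_mult_distrib ac_simps flip: power_mult)
  have "{\<Gamma> \<in> kout_choices n K. cut_free \<Gamma> {i} ({1..n} - D) \<and> cut_free \<Gamma> {j} ({1..n} - D)}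
      = {\<Gamma> \<in> kout_choices n K. cut_free \<Gamma> {i, j} ({1..n} - D)}"
    by (auto simp: cut_free_def)
  moreover have "real (card {\<Gamma> \<in> kout_choices n K. cut_free \<Gamma> {i, j} ({1..n} - D)})
      = (choice_ratio n K g)\<^sup>2 * choice_ratio n K (n - 3) ^ (n - g - 2) * real (card (kout_choices n K))"
    using card_isolated[of K n D g "{i, j}"] assms by (simp add: numeral_3_eq_3 power2_eq_square)
  moreover have "\<dots> \<le> (choice_ratio n K g)\<^sup>2 * (r\<^sup>2) ^ (n - g - 2) * real (card (kout_choices n K))"
    using le by (intro mult_right_mono mult_left_mono) auto
  ultimately show ?thesis using eq by (simp add: r_def)
qed

lemma connected_on_imp_not_isolated:
  assumes "connected_on R (kout_adj \<Gamma>)" "finite R" "2 \<le> card R" "i \<in> R"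
  shows "\<not> cut_free \<Gamma> {i} R"
proof
  assume cut: "cut_free \<Gamma> {i} R"
  have "\<not> R \<subseteq> {i}" using card_mono[of "{i}" R] assms(3) by auto
  then obtain j where "j \<in> R" "j \<noteq> i" by blast
  then obtain y where "y \<in> R" "kout_adj \<Gamma> i y"
    using connected_on_imp_neighbour[OF assms(1,4)] by metis
  then show False using cut by (auto simp: cut_free_def)
qed

lemma card_connected_le:
  assumes "K + 3 \<le> n" "K \<le> g" "g + 2 \<le> n" "D \<in> deletion_sets n g"
  shows "real (card {\<Gamma> \<in> kout_choices n K. connected_on ({1..n} - D) (kout_adj \<Gamma>)})
     \<le> (1 / (real (n - g) * isolation_prob n K g) + 1 / (choice_ratio n K (n - 2))\<^sup>2 - 1)
        * real (card (kout_choices n K))"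
proof -
  define R where "R = {1..n} - D"
  define G where "G = kout_choices n K"
  define r where "r = choice_ratio n K (n - 2)"
  define p where "p = isolation_prob n K g"
  have fR: "finite R" and cR: "card R = n - g"
    using assms(4) by (auto simp: R_def deletion_sets_def card_Diff_subset finite_subset)
  have r: "r > 0" using assms(1) by (simp add: r_def choice_ratio_def)
  have p: "p > 0" using assms r by (simp add: p_def isolation_prob_def r_def choice_ratio_def)
  have single: "real (card {\<Gamma> \<in> G. cut_free \<Gamma> {i} R}) = p * real (card G)" if "i \<in> R" for i
    using card_isolated[of K n D g "{i}"] that assms by (simp add: R_def G_def p_def isolation_prob_def numeral_2_eq_2)
  have "{\<Gamma> \<in> G. connected_on R (kout_adj \<Gamma>)} \<subseteq> {\<Gamma> \<in> G. \<forall>i\<in>R. \<not> cut_free \<Gamma> {i} R}"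
    using connected_on_imp_not_isolated fR cR assms(3) by auto
  then have "card {\<Gamma> \<in> G. connected_on R (kout_adj \<Gamma>)} \<le> card {\<Gamma> \<in> G. \<forall>i\<in>R. \<not> cut_free \<Gamma> {i} R}"
    by (intro card_mono) (auto simp: G_def finite_kout_choices)
  moreover have "R \<noteq> {}" using cR assms(3) by auto
  ultimately have "real (card {\<Gamma> \<in> G. connected_on R (kout_adj \<Gamma>)})
      \<le> (1 / (real (card R) * p) + (p / r)\<^sup>2 / p\<^sup>2 - 1) * real (card G)"
    using fR assms p single card_isolated_pair_le finite_kout_choices
    by (intro order.trans[OF _ card_none_le_second_moment]) (auto simp: G_def R_def p_def r_def)
  then have "real (card {\<Gamma> \<in> G. connected_on R (kout_adj \<Gamma>)})
      \<le> (1 / (real (n - g) * p) + 1 / r\<^sup>2 - 1) * real (card G)"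
    using p r by (simp add: cR power_divide)
  then show ?thesis by (simp add: p_def r_def R_def G_def)
qed

section \<open>Estimates for the union bound\<close>

lemma cut_prob_le_exp:
  assumes "1 \<le> k" "k + g < n"
  shows "cut_prob n K g k
     \<le> exp (real k * real K * (ln ((real k + real g) / real n) - (real n - real g - real k) / real n))"
proof -
  have n: "real n > 1" using assms by simp
  have a: "choice_ratio n K (k + g - 1) \<le> ((real k + real g) / real n) ^ K"
  proof -
    have "choice_ratio n K (k + g - 1) \<le> (real (k + g - 1) / real (n - 1)) ^ K"
      unfolding choice_ratio_def using assms by (intro binomial_ratio_le_power) auto
    also have "\<dots> \<le> ((real k + real g) / real n) ^ K"
      using assms n by (intro power_mono) (auto simp: of_nat_diff divide_simps algebra_simps)
    finally show ?thesis .
  qed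
  have b: "choice_ratio n K (n - 1 - k) \<le> exp (- (real k * real K / real n))"
  proof -
    have "choice_ratio n K (n - 1 - k) \<le> (real (n - 1 - k) / real (n - 1)) ^ K"
      unfolding choice_ratio_def using assms by (intro binomial_ratio_le_power) auto
    also have "\<dots> \<le> exp (- (real k / real n)) ^ K"
    proof (rule power_mono)
      have "real (n - 1 - k) / real (n - 1) = 1 + - (real k / (real n - 1))"
        using assms n by (simp add: of_nat_diff field_simps)
      also have "\<dots> \<le> exp (- (real k / (real n - 1)))" by (rule exp_ge_add_one_self)
      also have "\<dots> \<le> exp (- (real k / real n))" using n by (simp add: frac_le)
      finally show "real (n - 1 - k) / real (n - 1) \<le> exp (- (real k / real n))" .
    qed simp
    also have "\<dots> = exp (- (real k * real K / real n))"
      by (simp add: exp_of_nat_mult[symmetric] algebra_simps)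
    finally show ?thesis .
  qed
  have "cut_prob n K g k \<le> (((real k + real g) / real n) ^ K) ^ k * exp (- (real k * real K / real n)) ^ (n - g - k)"
    unfolding cut_prob_def using a b by (intro mult_mono power_mono) (auto simp: choice_ratio_def)
  also have "\<dots> = exp (real k * real K * ln ((real k + real g) / real n))
      * exp (- (real k * real K / real n) * (real n - real g - real k))"
    using assms by (simp add: exp_of_nat_mult[symmetric] of_nat_diff exp_ln power_mult[symmetric]
        flip: powr_realpow) (simp add: powr_def algebra_simps)
  also have "\<dots> = exp (real k * real K * (ln ((real k + real g) / real n) - (real n - real g - real k) / real n))"
    by (simp add: exp_add[symmetric] field_simps)
  finally show ?thesis .
qed

lemma cut_prob_le_exp_alpha:
  fixes \<alpha> :: real
  assumes "0 < \<alpha>" "real g \<le> \<alpha> * real n" "1 \<le> k" "2 * k \<le> n - g"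
  shows "cut_prob n K g k
     \<le> exp (real k * real K * (ln (\<alpha> + real k / real n) - (1 - \<alpha> - real k / real n)))"
proof -
  have n: "real n > 0" using assms by simp
  have "ln ((real k + real g) / real n) \<le> ln (\<alpha> + real k / real n)"
    using assms n by (subst ln_le_cancel_iff) (auto simp: field_simps)
  moreover have "(real n - real g - real k) / real n \<ge> 1 - \<alpha> - real k / real n"
    using assms n by (simp add: field_simps)
  ultimately have "real k * real K * (ln ((real k + real g) / real n) - (real n - real g - real k) / real n)
      \<le> real k * real K * (ln (\<alpha> + real k / real n) - (1 - \<alpha> - real k / real n))"
    by (intro mult_left_mono) auto
  moreover have "k + g < n" using assms(3,4) by linarith
  ultimately show ?thesis
    using cut_prob_le_exp[OF assms(3), of g n K] by (meson exp_le_cancel_iff order_trans)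
qed

lemma cut_prob_nonneg: "0 \<le> cut_prob n K g k"
  by (simp add: cut_prob_def choice_ratio_def)

lemma cut_term_le_small:
  fixes \<alpha> x0 :: real
  assumes "0 < \<alpha>" "real g \<le> \<alpha> * real n" "1 \<le> k" "2 * k \<le> n - g" "real k \<le> x0 * real n"
  shows "real ((n - g) choose k) * cut_prob n K g k
     \<le> (real n * exp (- real K * (1 - \<alpha> - ln \<alpha> - x0 * (1 + 1 / \<alpha>)))) ^ k"
proof -
  define x where "x = real k / real n"
  define d where "d = 1 - \<alpha> - ln \<alpha> - x0 * (1 + 1 / \<alpha>)"
  have n: "real n > 0" using assms by simp
  have pos: "1 + x / \<alpha> > 0" using assms n by (simp add: x_def add_pos_nonneg)
  have "\<alpha> + x = \<alpha> * (1 + x / \<alpha>)" using assms by (simp add: field_simps)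
  then have "ln (\<alpha> + x) = ln (\<alpha> * (1 + x / \<alpha>))" by (rule arg_cong)
  also have "\<dots> = ln \<alpha> + ln (1 + x / \<alpha>)" by (rule ln_mult_pos) (use assms pos in auto)
  also have "\<dots> \<le> ln \<alpha> + x / \<alpha>"
    using assms n by (simp add: x_def ln_add_one_self_le_self)
  finally have "ln (\<alpha> + x) - (1 - \<alpha> - x) \<le> - (1 - \<alpha> - ln \<alpha> - x * (1 + 1 / \<alpha>))"
    by (simp add: field_simps)
  also have "\<dots> \<le> - d"
  proof -
    have "x \<le> x0" using assms(5) n by (simp add: x_def divide_le_eq mult.commute)
    then have "x * (1 + 1 / \<alpha>) \<le> x0 * (1 + 1 / \<alpha>)" using assms by (intro mult_right_mono) auto
    then show ?thesis by (simp add: d_def)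
  qed
  finally have "real k * real K * (ln (\<alpha> + x) - (1 - \<alpha> - x)) \<le> real k * real K * - d"
    by (rule mult_left_mono) simp
  then have "cut_prob n K g k \<le> exp (real k * real K * - d)"
    using cut_prob_le_exp_alpha[OF assms(1-4), of K] unfolding x_def
    by (meson exp_le_cancel_iff order_trans)
  also have "\<dots> = exp (- real K * d) ^ k"
    by (simp add: exp_of_nat_mult[symmetric] mult.assoc)
  finally have cut: "cut_prob n K g k \<le> exp (- real K * d) ^ k" .
  have "(n - g) choose k \<le> (n - g) ^ k" by (rule binomial_le_pow) (use assms(4) in linarith)
  also have "\<dots> \<le> n ^ k" by (rule power_mono) simp_all
  finally have "real ((n - g) choose k) \<le> real n ^ k"
    by (metis of_nat_le_iff of_nat_power)
  then have "real ((n - g) choose k) * cut_prob n K g k \<le> real n ^ k * exp (- real K * d) ^ k"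
    using cut cut_prob_nonneg by (intro mult_mono) auto
  then show ?thesis by (simp add: d_def power_mult_distrib)
qed

lemma cut_term_le_large:
  fixes \<alpha> x0 :: real
  assumes "0 < \<alpha>" "real g \<le> \<alpha> * real n" "\<alpha> * real n < real g + 1" "1 \<le> k" "2 * k \<le> n - g"
    and "2 \<le> (1 - \<alpha>) * real n" "x0 * real n < real k"
  shows "real ((n - g) choose k) * cut_prob n K g k \<le> 2 ^ n * exp (- (x0 * real n * real K * ((1 - \<alpha>) / 2)))"
proof -
  define x where "x = real k / real n"
  have n: "real n > 0" using assms by simp
  define t where "t = 1 / (2 * real n)"
  have "x \<le> (1 - \<alpha>) / 2 + t"
    using assms n by (simp add: x_def t_def field_simps of_nat_diff)
  moreover have "t \<le> (1 - \<alpha>) / 4" using assms n by (simp add: t_def field_simps)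
  moreover have "ln (\<alpha> + x) \<le> \<alpha> + x - 1"
    using assms n by (intro ln_le_minus_one) (simp add: x_def add_pos_nonneg)
  ultimately have "ln (\<alpha> + x) - (1 - \<alpha> - x) \<le> - ((1 - \<alpha>) / 2)" by argo
  then have "real k * real K * (ln (\<alpha> + x) - (1 - \<alpha> - x)) \<le> real k * real K * (- ((1 - \<alpha>) / 2))"
    by (intro mult_left_mono) auto
  also have "\<dots> \<le> - (x0 * real n * real K * ((1 - \<alpha>) / 2))"
  proof -
    have "0 < (1 - \<alpha>) * real n" using assms(6) by linarith
    then have "0 < 1 - \<alpha>" using n by (simp add: zero_less_mult_iff)
    then have "x0 * real n * real K * ((1 - \<alpha>) / 2) \<le> real k * real K * ((1 - \<alpha>) / 2)"
      using assms(7) by (intro mult_right_mono) auto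
    then show ?thesis by (simp only: mult_minus_right neg_le_iff_le)
  qed
  finally have "cut_prob n K g k \<le> exp (- (x0 * real n * real K * ((1 - \<alpha>) / 2)))"
    using cut_prob_le_exp_alpha[OF assms(1,2,4,5), of K] unfolding x_def
    by (meson exp_le_cancel_iff order_trans)
  moreover have "(n - g) choose k \<le> 2 ^ n"
    by (meson binomial_le_pow2 diff_le_self le_trans one_le_numeral power_increasing)
  then have "real ((n - g) choose k) \<le> 2 ^ n"
    by (metis of_nat_le_iff of_nat_numeral of_nat_power)
  ultimately show ?thesis
    by (intro mult_mono) (auto simp: cut_prob_nonneg)
qed

lemma sum_power_le_double:
  fixes \<delta> :: real
  assumes "0 \<le> \<delta>" "\<delta> \<le> 1 / 2"
  shows "(\<Sum>k = 1..N. \<delta> ^ k) \<le> 2 * \<delta>"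
proof (cases "N = 0")
  case False
  then have "(1 - \<delta>) * (\<Sum>k = 1..N. \<delta> ^ k) \<le> \<delta>"
    using sum_gp_multiplied[of 1 N \<delta>] assms by simp
  moreover have "(\<Sum>k = 1..N. \<delta> ^ k) \<ge> 0" using assms by (intro sum_nonneg) auto
  moreover have "(1 / 2) * (\<Sum>k = 1..N. \<delta> ^ k) \<le> (1 - \<delta>) * (\<Sum>k = 1..N. \<delta> ^ k)"
    using assms calculation(2) by (intro mult_right_mono) auto
  ultimately show ?thesis by linarith
qed (use assms in simp)

lemma cut_bound_le:
  fixes n K g :: nat and \<alpha> x0 :: real
  defines "\<delta> \<equiv> real n * exp (- real K * (1 - \<alpha> - ln \<alpha> - x0 * (1 + 1 / \<alpha>)))"
  assumes "0 < \<alpha>" "real g \<le> \<alpha> * real n" "\<alpha> * real n < real g + 1"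
    and "2 \<le> (1 - \<alpha>) * real n" "\<delta> \<le> 1 / 2"
  shows "cut_bound n K g \<le> 2 * \<delta> + real n * 2 ^ n * exp (- (x0 * real n * real K * ((1 - \<alpha>) / 2)))"
proof -
  define L where "L = 2 ^ n * exp (- (x0 * real n * real K * ((1 - \<alpha>) / 2)))"
  have k: "1 \<le> k" "2 * k \<le> n - g" if "k \<in> {1..(n - g) div 2}" for k
    using that by auto
  have summand: "real ((n - g) choose k) * cut_prob n K g k \<le> \<delta> ^ k + L" if "k \<in> {1..(n - g) div 2}" for k
  proof (cases "real k \<le> x0 * real n")
    case True
    then show ?thesis using cut_term_le_small[OF assms(2,3) k[OF that]]
      by (simp add: \<delta>_def L_def add_increasing2)
  next
    case False
    then show ?thesis using cut_term_le_large[OF assms(2-4) k[OF that] assms(5)]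
      by (simp add: \<delta>_def L_def add_increasing)
  qed
  have "cut_bound n K g \<le> (\<Sum>k = 1..(n - g) div 2. \<delta> ^ k + L)"
    unfolding cut_bound_def using summand by (rule sum_mono)
  also have "\<dots> \<le> (\<Sum>k = 1..n. \<delta> ^ k + L)"
    by (intro sum_mono2) (auto simp: \<delta>_def L_def)
  also have "\<dots> \<le> 2 * \<delta> + real n * L"
    using sum_power_le_double[of \<delta> n] assms by (simp add: sum.distrib \<delta>_def)
  finally show ?thesis by (simp add: L_def mult.assoc)
qed

section \<open>Estimates for the second moment bound\<close>

lemma choice_ratio_pred:
  assumes "K < n" "2 \<le> n"
  shows "choice_ratio n K (n - 2) = 1 - real K / (real n - 1)"
proof -
  have "n - 1 - 1 = n - 2" by simp
  then have "choice_ratio n K (n - 2) = real (n - 1 - K) / real (n - 1)"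
    using binomial_ratio_pred[of "n - 1" K] assms by (simp add: choice_ratio_def)
  also have "\<dots> = 1 - real K / (real n - 1)"
    using assms by (simp add: of_nat_diff field_simps)
  finally show ?thesis .
qed

lemma powr_le_choice_ratio:
  fixes \<alpha> \<kappa> :: real
  assumes "\<alpha> * real n < real g + 1" "K \<le> g" "g + 2 \<le> n" "real K \<le> \<kappa>" "1 + \<kappa> < \<alpha> * real n"
  shows "(\<alpha> - (1 + \<kappa>) / real n) powr \<kappa> \<le> choice_ratio n K g"
proof -
  define \<beta> where "\<beta> = \<alpha> - (1 + \<kappa>) / real n"
  have n: "real n > 0" using assms(3) by simp
  have \<beta>: "0 < \<beta>" "\<beta> \<le> 1"
    using assms n by (auto simp: \<beta>_def field_simps)
  have "\<beta> powr \<kappa> \<le> \<beta> powr real K"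
    using \<beta> by (intro powr_mono' assms(4)) auto
  also have "\<dots> = \<beta> ^ K" using \<beta> by (simp add: powr_realpow)
  also have "\<dots> \<le> ((real g - real K) / real (n - 1)) ^ K"
  proof (rule power_mono)
    have "\<beta> = (\<alpha> * real n - 1 - \<kappa>) / real n"
      using n by (simp add: \<beta>_def field_simps)
    also have "\<dots> \<le> (real g - real K) / real n"
      using assms(1,4) n by (intro divide_right_mono) auto
    also have "\<dots> \<le> (real g - real K) / real (n - 1)"
      using assms(2,3) by (intro divide_left_mono) (auto simp: of_nat_diff)
    finally show "\<beta> \<le> (real g - real K) / real (n - 1)" .
  qed (use \<beta> in simp)
  also have "\<dots> \<le> choice_ratio n K g"
    unfolding choice_ratio_def using assms(2,3) by (intro power_le_binomial_ratio) auto
  finally show ?thesis by (simp add: \<beta>_def)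
qed

lemma powr_le_choice_ratio_pred_power:
  fixes \<alpha> \<kappa> :: real
  assumes "\<alpha> * real n < real g + 1" "K < n" "g + 2 \<le> n" "real K \<le> \<kappa>" "\<kappa> < real n - 1"
  shows "(1 - \<kappa> / (real n - 1)) powr ((1 - \<alpha>) * real n) \<le> choice_ratio n K (n - 2) ^ (n - g - 1)"
proof -
  define \<gamma> where "\<gamma> = 1 - \<kappa> / (real n - 1)"
  have n: "real n \<ge> 2" using assms(3) by simp
  have \<gamma>: "0 < \<gamma>" "\<gamma> \<le> 1"
    using assms(4,5) n by (auto simp: \<gamma>_def field_simps)
  have "\<gamma> powr ((1 - \<alpha>) * real n) \<le> \<gamma> powr real (n - g - 1)"
    using assms(1,3) \<gamma> by (intro powr_mono') (auto simp: of_nat_diff algebra_simps)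
  also have "\<dots> = \<gamma> ^ (n - g - 1)" using \<gamma> by (simp add: powr_realpow)
  also have "\<dots> \<le> choice_ratio n K (n - 2) ^ (n - g - 1)"
  proof (rule power_mono)
    have "real K / (real n - 1) \<le> \<kappa> / (real n - 1)"
      using assms(4) n by (intro divide_right_mono) auto
    then show "\<gamma> \<le> choice_ratio n K (n - 2)"
      using choice_ratio_pred[of K n] assms(2) n by (simp add: \<gamma>_def)
  qed (use \<gamma> in simp)
  finally show ?thesis by (simp add: \<gamma>_def)
qed

lemma isolation_prob_ge:
  fixes \<alpha> \<kappa> :: real
  assumes "real g \<le> \<alpha> * real n" "\<alpha> * real n < real g + 1" "K \<le> g" "g + 2 \<le> n"
    and "real K \<le> \<kappa>" "1 + \<kappa> < \<alpha> * real n" "\<kappa> < real n - 1"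
  shows "(1 - \<alpha>) * real n * (\<alpha> - (1 + \<kappa>) / real n) powr \<kappa> * (1 - \<kappa> / (real n - 1)) powr ((1 - \<alpha>) * real n)
     \<le> real (n - g) * isolation_prob n K g"
proof -
  have "(1 - \<alpha>) * real n \<le> real (n - g)"
    using assms(1,4) by (simp add: of_nat_diff algebra_simps)
  moreover have "(\<alpha> - (1 + \<kappa>) / real n) powr \<kappa> \<le> choice_ratio n K g"
    using assms by (intro powr_le_choice_ratio) auto
  moreover have "(1 - \<kappa> / (real n - 1)) powr ((1 - \<alpha>) * real n) \<le> choice_ratio n K (n - 2) ^ (n - g - 1)"
    using assms by (intro powr_le_choice_ratio_pred_power) auto
  ultimately show ?thesis
    unfolding isolation_prob_def mult.assoc[symmetric] by (intro mult_mono) (auto simp: choice_ratio_def)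
qed

section \<open>The threshold\<close>

lemma nat_floor_mult_bounds:
  fixes \<alpha> :: real
  assumes "0 \<le> \<alpha>"
  shows "real (nat \<lfloor>\<alpha> * real n\<rfloor>) \<le> \<alpha> * real n" "\<alpha> * real n < real (nat \<lfloor>\<alpha> * real n\<rfloor>) + 1"
  using assms by simp_all

lemma log_threshold_pos:
  fixes \<alpha> :: real
  assumes "0 < \<alpha>" "\<alpha> < 1"
  shows "0 < 1 - \<alpha> - ln \<alpha>"
  using ln_le_minus_one[of \<alpha>] ln_eq_minus_one[of \<alpha>] assms by fastforce

lemma P_conn_le_isolation_bound:
  fixes \<alpha> \<kappa> :: real
  assumes "real g \<le> \<alpha> * real n" "\<alpha> * real n < real g + 1" "2 \<le> (1 - \<alpha>) * real n"
    and "real K \<le> \<kappa>" "1 + \<kappa> < \<alpha> * real n"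
  shows "P_conn n K g \<le> 1 / ((1 - \<alpha>) * real n * (\<alpha> - (1 + \<kappa>) / real n) powr \<kappa>
      * (1 - \<kappa> / (real n - 1)) powr ((1 - \<alpha>) * real n)) + 1 / (1 - \<kappa> / (real n - 1))\<^sup>2 - 1"
proof -
  define M where "M = (1 - \<alpha>) * real n * (\<alpha> - (1 + \<kappa>) / real n) powr \<kappa>
      * (1 - \<kappa> / (real n - 1)) powr ((1 - \<alpha>) * real n)"
  define \<gamma> where "\<gamma> = 1 - \<kappa> / (real n - 1)"
  have Kg: "K < g" using assms by linarith
  have "real g + 2 \<le> real n" using assms(1,3) by (simp add: algebra_simps)
  then have gn: "g + 2 \<le> n" by linarith
  have "\<alpha> * real n + 2 \<le> real n" using assms(3) by (simp add: algebra_simps)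
  then have \<kappa>: "\<kappa> < real n - 1" using assms(5) by linarith
  have "0 < \<alpha> - (1 + \<kappa>) / real n" using assms by (simp add: field_simps)
  moreover have "0 < \<gamma>" using \<kappa> gn by (simp add: \<gamma>_def field_simps)
  moreover have "0 < (1 - \<alpha>) * real n" using assms(3) by linarith
  then have "0 < 1 - \<alpha>" by (simp add: zero_less_mult_iff)
  ultimately have "0 < M" using gn by (simp add: M_def \<gamma>_def)
  have iso: "M \<le> real (n - g) * isolation_prob n K g"
    unfolding M_def using assms \<kappa> Kg gn by (intro isolation_prob_ge) auto
  have "\<gamma> \<le> choice_ratio n K (n - 2)"
    using choice_ratio_pred[of K n] Kg gn assms(4) \<kappa> by (simp add: \<gamma>_def divide_right_mono)
  then have "1 / (choice_ratio n K (n - 2))\<^sup>2 \<le> 1 / \<gamma>\<^sup>2"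
    using \<open>0 < \<gamma>\<close> by (simp add: frac_le power_mono)
  moreover have "1 / (real (n - g) * isolation_prob n K g) \<le> 1 / M"
    by (rule frac_le[OF _ order.refl \<open>0 < M\<close> iso]) simp
  moreover have "P_conn n K g \<le> 1 / (real (n - g) * isolation_prob n K g) + 1 / (choice_ratio n K (n - 2))\<^sup>2 - 1"
    using Kg gn by (intro P_conn_le card_connected_le) auto
  ultimately show ?thesis by (simp add: M_def \<gamma>_def)
qed

lemma P_conn_tendsto_zero:
  fixes \<alpha> c :: real and K :: "nat \<Rightarrow> nat"
  assumes "0 < \<alpha>" "\<alpha> < 1" "0 < c" "c < 1"
    and "\<forall>\<^sub>F n in sequentially. real (K n) \<le> c * (ln (real n) / (1 - \<alpha> - ln \<alpha>))"
  shows "(\<lambda>n. P_conn n (K n) (nat \<lfloor>\<alpha> * real n\<rfloor>)) \<longlonglongrightarrow> 0"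
proof -
  define C where "C = c / (1 - \<alpha> - ln \<alpha>)"
  define B where "B n = 1 / ((1 - \<alpha>) * real n * (\<alpha> - (1 + C * ln (real n)) / real n) powr (C * ln (real n))
      * (1 - C * ln (real n) / (real n - 1)) powr ((1 - \<alpha>) * real n))
      + 1 / (1 - C * ln (real n) / (real n - 1))\<^sup>2 - 1" for n :: nat
  have A: "0 < 1 - \<alpha> - ln \<alpha>" using log_threshold_pos[OF assms(1,2)] .
  then have "0 < C" "C * (1 - \<alpha> - ln \<alpha>) < 1" using assms(3,4) by (simp_all add: C_def)
  then have "1 + ln \<alpha> * C - C * (1 - \<alpha>) > 0" by (simp add: algebra_simps)
    \<comment> \<open>the sign of the exponent of \<open>n\<close> in \<open>B n\<close>, in the normal form \<open>real_asymp\<close> looks for\<close>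
  then have lim: "B \<longlonglongrightarrow> 0" unfolding B_def using assms(1,2) \<open>0 < C\<close> by real_asymp
  have "\<forall>\<^sub>F n in sequentially. real (K n) \<le> C * ln (real n)"
    using assms(5) A by (simp add: C_def)
  moreover have "\<forall>\<^sub>F n in sequentially. 1 + C * ln (real n) < \<alpha> * real n"
    "\<forall>\<^sub>F n in sequentially. 2 \<le> (1 - \<alpha>) * real n"
    using assms(1,2) \<open>0 < C\<close> by real_asymp+
  ultimately have upper: "\<forall>\<^sub>F n in sequentially. P_conn n (K n) (nat \<lfloor>\<alpha> * real n\<rfloor>) \<le> B n"
  proof eventually_elim
    case (elim n)
    show ?case unfolding B_def
    proof (rule P_conn_le_isolation_bound)
      show "real (nat \<lfloor>\<alpha> * real n\<rfloor>) \<le> \<alpha> * real n" "\<alpha> * real n < real (nat \<lfloor>\<alpha> * real n\<rfloor>) + 1"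
        using nat_floor_mult_bounds[of \<alpha> n] assms(1) by auto
    qed (use elim in auto)
  qed
  have lower: "\<forall>\<^sub>F n in sequentially. 0 \<le> P_conn n (K n) (nat \<lfloor>\<alpha> * real n\<rfloor>)"
    by (simp add: P_conn_def)
  show ?thesis by (rule tendsto_sandwich[OF lower upper tendsto_const lim])
qed

lemma P_conn_ge_cut_bound:
  fixes n K g :: nat and \<alpha> x0 \<kappa> :: real
  defines "d \<equiv> 1 - \<alpha> - ln \<alpha> - x0 * (1 + 1 / \<alpha>)"
  assumes "0 < \<alpha>" "real g \<le> \<alpha> * real n" "\<alpha> * real n < real g + 1" "2 \<le> (1 - \<alpha>) * real n"
    and "K < n" "\<kappa> \<le> real K" "0 \<le> x0" "0 < d" "real n * exp (- \<kappa> * d) \<le> 1 / 2"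
  shows "1 - (2 * (real n * exp (- \<kappa> * d)) + real n * 2 ^ n * exp (- (x0 * real n * \<kappa> * ((1 - \<alpha>) / 2))))
     \<le> P_conn n K g"
proof (rule P_conn_ge)
  have "0 < (1 - \<alpha>) * real n" using assms(5) by linarith
  then have "0 < 1 - \<alpha>" by (simp add: zero_less_mult_iff)
  have \<delta>: "real n * exp (- real K * d) \<le> real n * exp (- \<kappa> * d)"
    using assms(7,9) by (intro mult_left_mono) auto
  have "x0 * real n * \<kappa> * ((1 - \<alpha>) / 2) \<le> x0 * real n * real K * ((1 - \<alpha>) / 2)"
    using assms(7,8) \<open>0 < 1 - \<alpha>\<close> by (intro mult_right_mono mult_left_mono) auto
  then have L: "real n * 2 ^ n * exp (- (x0 * real n * real K * ((1 - \<alpha>) / 2)))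
      \<le> real n * 2 ^ n * exp (- (x0 * real n * \<kappa> * ((1 - \<alpha>) / 2)))"
    by (intro mult_left_mono) auto
  fix D assume "D \<in> deletion_sets n g"
  then have "real (card {\<Gamma> \<in> kout_choices n K. \<not> connected_on ({1..n} - D) (kout_adj \<Gamma>)})
      \<le> cut_bound n K g * real (card (kout_choices n K))"
    using assms(6) by (rule card_disconnected_le[rotated])
  also have "real n * exp (- real K * d) \<le> 1 / 2" using \<delta> assms(10) by linarith
  then have "cut_bound n K g \<le> 2 * (real n * exp (- real K * d))
      + real n * 2 ^ n * exp (- (x0 * real n * real K * ((1 - \<alpha>) / 2)))"
    unfolding d_def using assms(2-5) by (intro cut_bound_le) auto
  also have "\<dots> \<le> 2 * (real n * exp (- \<kappa> * d)) + real n * 2 ^ n * exp (- (x0 * real n * \<kappa> * ((1 - \<alpha>) / 2)))"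
    using \<delta> L by linarith
  finally show "real (card {\<Gamma> \<in> kout_choices n K. \<not> connected_on ({1..n} - D) (kout_adj \<Gamma>)})
      \<le> (2 * (real n * exp (- \<kappa> * d)) + real n * 2 ^ n * exp (- (x0 * real n * \<kappa> * ((1 - \<alpha>) / 2))))
        * real (card (kout_choices n K))"
    by (simp add: mult_right_mono)
qed (use assms in \<open>simp_all add: algebra_simps\<close>)

lemma P_conn_tendsto_one:
  fixes \<alpha> c :: real and K :: "nat \<Rightarrow> nat"
  assumes "0 < \<alpha>" "\<alpha> < 1" "1 < c"
    and "\<forall>\<^sub>F n in sequentially. c * (ln (real n) / (1 - \<alpha> - ln \<alpha>)) \<le> real (K n)"
    and "\<forall>\<^sub>F n in sequentially. K n < n"
  shows "(\<lambda>n. P_conn n (K n) (nat \<lfloor>\<alpha> * real n\<rfloor>)) \<longlonglongrightarrow> 1"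
proof -
  define A where "A = 1 - \<alpha> - ln \<alpha>"
  define C where "C = c / A"
  define b where "b = 1 + 1 / \<alpha>"
  define x0 where "x0 = (c - 1) / (2 * C * b)"
  define d where "d = A - x0 * b"
  define B where "B n = 2 * (real n * exp (- (C * d * ln (real n))))
      + real n * 2 ^ n * exp (- (x0 * real n * (C * ln (real n)) * ((1 - \<alpha>) / 2)))" for n :: nat
  have "0 < A" using log_threshold_pos[OF assms(1,2)] by (simp add: A_def)
  then have "C * A = c" "0 < C" using assms(3) by (simp_all add: C_def)
  have "0 < b" using assms(1) by (simp add: b_def add_pos_pos)
  then have "0 < x0" "C * d = (c + 1) / 2"
    using \<open>0 < C\<close> \<open>C * A = c\<close> assms(3) by (simp_all add: x0_def d_def field_simps)
  then have "1 < C * d" using assms(3) by simp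
  then have "0 < C * d" by linarith
  then have "0 < d" using \<open>0 < C\<close> by (simp add: zero_less_mult_iff)
  have lim: "B \<longlonglongrightarrow> 0"
    unfolding B_def using \<open>1 < C * d\<close> \<open>0 < x0\<close> \<open>0 < C\<close> assms(2) by real_asymp
  have "\<forall>\<^sub>F n in sequentially. real n * exp (- (C * d * ln (real n))) \<le> 1 / 2"
    "\<forall>\<^sub>F n in sequentially. 2 \<le> (1 - \<alpha>) * real n"
    using \<open>1 < C * d\<close> assms(1,2) by real_asymp+
  moreover have "\<forall>\<^sub>F n in sequentially. C * ln (real n) \<le> real (K n)"
    using assms(4) \<open>0 < A\<close> by (simp add: C_def A_def)
  ultimately have lower: "\<forall>\<^sub>F n in sequentially. 1 - B n \<le> P_conn n (K n) (nat \<lfloor>\<alpha> * real n\<rfloor>)"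
    using assms(5)
  proof eventually_elim
    case (elim n)
    then show ?case
      using nat_floor_mult_bounds[of \<alpha> n] assms(1) \<open>0 < x0\<close> \<open>0 < d\<close>
        P_conn_ge_cut_bound[of \<alpha> "nat \<lfloor>\<alpha> * real n\<rfloor>" n "K n" "C * ln (real n)" x0]
      unfolding B_def d_def A_def b_def by (simp add: mult_ac)
  qed
  have upper: "\<forall>\<^sub>F n in sequentially. P_conn n (K n) (nat \<lfloor>\<alpha> * real n\<rfloor>) \<le> 1"
    by (simp add: P_conn_def)
  show ?thesis
    using tendsto_sandwich[OF lower upper _ tendsto_const] tendsto_diff[OF tendsto_const lim, of 1] by simp
qed

lemma asymp_equiv_nonneg_eventually_le:
  fixes f g :: "'a \<Rightarrow> real"
  assumes "f \<sim>[F] g" "\<forall>\<^sub>F x in F. 0 \<le> f x \<and> 0 \<le> g x" "1 < s"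
  shows "\<forall>\<^sub>F x in F. f x \<le> s * g x"
  using asymp_equiv_imp_eventually_le[OF assms(1,3)] assms(2) by eventually_elim simp

lemma asymp_equiv_nonneg_eventually_ge:
  fixes f g :: "'a \<Rightarrow> real"
  assumes "f \<sim>[F] g" "\<forall>\<^sub>F x in F. 0 \<le> f x \<and> 0 \<le> g x" "r < 1"
  shows "\<forall>\<^sub>F x in F. r * g x \<le> f x"
  using asymp_equiv_imp_eventually_ge[OF assms(1,3)] assms(2) by eventually_elim simp

lemma asymp_equiv_log_bounds:
  fixes c A :: real and K :: "nat \<Rightarrow> nat"
  assumes "(\<lambda>n. real (K n)) \<sim>[at_top] (\<lambda>n. c * (ln (real n) / A))" "0 < c" "0 < A"
  shows "r < c \<Longrightarrow> \<forall>\<^sub>F n in sequentially. r * (ln (real n) / A) \<le> real (K n)"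
    and "c < s \<Longrightarrow> \<forall>\<^sub>F n in sequentially. real (K n) \<le> s * (ln (real n) / A)"
    and "\<forall>\<^sub>F n in sequentially. K n < n"
proof -
  have "\<forall>\<^sub>F n in sequentially. 0 \<le> ln (real n)" by real_asymp
  then have nonneg: "\<forall>\<^sub>F n in sequentially. 0 \<le> real (K n) \<and> 0 \<le> c * (ln (real n) / A)"
    by eventually_elim (use assms(2,3) in simp)
  show "\<forall>\<^sub>F n in sequentially. r * (ln (real n) / A) \<le> real (K n)" if "r < c"
    using asymp_equiv_nonneg_eventually_ge[OF assms(1) nonneg, of "r / c"] that assms(2) by simp
  show upper: "\<forall>\<^sub>F n in sequentially. real (K n) \<le> s * (ln (real n) / A)" if "c < s" for s
    using asymp_equiv_nonneg_eventually_le[OF assms(1) nonneg, of "s / c"] that assms(2) by simp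
  have "\<forall>\<^sub>F n in sequentially. (c + 1) * (ln (real n) / A) < real n"
    using assms(2,3) by real_asymp
  with upper[of "c + 1"] show "\<forall>\<^sub>F n in sequentially. K n < n"
    by (auto elim: eventually_elim2)
qed

theorem theorem3p1:
  fixes \<alpha> c :: real and K :: "nat \<Rightarrow> nat"
  assumes "0 < \<alpha>" "\<alpha> < 1" "0 < c"
    and "(\<lambda>n. real (K n)) \<sim>[at_top] (\<lambda>n. c * (ln (real n) / (1 - \<alpha> - ln \<alpha>)))"
  shows "(c > 1 \<longrightarrow> (\<lambda>n. P_conn n (K n) (nat \<lfloor>\<alpha> * real n\<rfloor>)) \<longlonglongrightarrow> 1)
       \<and> (c < 1 \<longrightarrow> (\<lambda>n. P_conn n (K n) (nat \<lfloor>\<alpha> * real n\<rfloor>)) \<longlonglongrightarrow> 0)"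
proof -
  note K_bounds = asymp_equiv_log_bounds[OF assms(4,3) log_threshold_pos[OF assms(1,2)]]
  have "(\<lambda>n. P_conn n (K n) (nat \<lfloor>\<alpha> * real n\<rfloor>)) \<longlonglongrightarrow> 1" if "1 < c"
    using that K_bounds(1)[of "(c + 1) / 2"] K_bounds(3)
    by (intro P_conn_tendsto_one[OF assms(1,2), of "(c + 1) / 2"]) auto
  moreover have "(\<lambda>n. P_conn n (K n) (nat \<lfloor>\<alpha> * real n\<rfloor>)) \<longlonglongrightarrow> 0" if "c < 1"
    using that K_bounds(2)[of "(c + 1) / 2"] assms(3)
    by (intro P_conn_tendsto_zero[OF assms(1,2), of "(c + 1) / 2"]) auto
  ultimately show ?thesis by blast
qed

end
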